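(* Let $m\ge2$ be an integer and let $g\in C^\infty(\mathbb{R})$ with $g(0)>0$. Let $\tilde g\in C^\infty(\mathbb{R})$ satisfy, for some $0<\delta<1$: $\tilde g(x)=g(x)$ for $|x|\le\delta$, $\tilde g(x)=\frac9{10}g(0)$ for $|x|\ge1$, and $0\le -x\tilde g'(x)<\frac15 g(0)$, $|x^2\tilde g''(x)|<\frac15g(0)$ for all $x\in\mathbb{R}$; and suppose $\frac9{10}g(0)\le\tilde g\le g(0)$ on $\mathbb{R}$. Put $\hat g=\tilde g/g(0)$ and $p(s,\tilde X)=\hat g(\tilde Xs)s^{2m}-s$. Then there is a function $\alpha\in C^\infty([0,\infty))$ such that for all $\tilde X\ge0$, $$\frac{\partial p}{\partial s}(\alpha(\tilde X),\tilde X)=0\quad\text{and}\quad \alpha_0\le\alpha(\tilde X)\le\alpha_1,$$ where $\alpha_0=(2m)^{-\frac1{2m-1}}$ and $\alpha_1=(\tfrac45\cdot 2m)^{-\frac1{2m-1}}$. *)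

theory Defs
  imports "HOL-Analysis.Analysis"
begin

definition smooth_real :: "(real \<Rightarrow> real) \<Rightarrow> bool" where
  "smooth_real f \<longleftrightarrow> (\<exists>D :: nat \<Rightarrow> real \<Rightarrow> real. D 0 = f \<and>
     (\<forall>n x. (D n has_real_derivative D (Suc n) x) (at x)))"

definition smooth_on_halfline :: "(real \<Rightarrow> real) \<Rightarrow> bool" where
  "smooth_on_halfline f \<longleftrightarrow> (\<exists>D :: nat \<Rightarrow> real \<Rightarrow> real.
     (\<forall>x\<ge>0. D 0 x = f x) \<and>
     (\<forall>n x. x \<ge> 0 \<longrightarrow> (D n has_real_derivative D (Suc n) x) (at x within {0..})))"

end

theory Submission
  imports Defs
begin

(* Write k = 2m and G = gt / g 0. Substituting u = X s, the critical point equation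
   d/ds (G (X s) s^k - s) = 0 becomes s^(k-1) h(u) = 1, where h u = u G'(u) + k G(u) is the
   Euler operator applied to G. The bounds on gt give 4k/5 < h <= k, so s = h(u)^(-1/(k-1)) lies
   between alpha_0 and alpha_1, and X = u / s = L(u) with L(u) = u h(u)^(1/(k-1)). The bound on
   x^2 gt'' makes L' > 0, and h >= 4k/5 makes L grow linearly in both directions, so L is a
   smooth bijection of the real line with smooth inverse, and alpha(X) = h(L^-1 X)^(-1/(k-1))
   is a smooth branch of critical points. *)

fun n_times_differentiable :: "nat \<Rightarrow> (real \<Rightarrow> real) \<Rightarrow> bool" where
  "n_times_differentiable 0 f \<longleftrightarrow> True"
| "n_times_differentiable (Suc n) f \<longleftrightarrow>
     (\<forall>x. f field_differentiable at x) \<and> n_times_differentiable n (deriv f)"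

lemma n_times_differentiable_SucI:
  assumes "\<And>x. (f has_real_derivative f' x) (at x)" and "n_times_differentiable n f'"
  shows "n_times_differentiable (Suc n) f"
proof -
  have "deriv f = f'"
    using assms(1) by (intro ext DERIV_imp_deriv)
  then show ?thesis
    using assms by (auto simp: field_differentiable_def)
qed

lemma n_times_differentiable_SucD:
  "n_times_differentiable (Suc n) f \<Longrightarrow> (f has_real_derivative deriv f x) (at x)"
  by (simp add: DERIV_deriv_iff_field_differentiable)

lemma n_times_differentiable_Suc_imp:
  "n_times_differentiable (Suc n) f \<Longrightarrow> n_times_differentiable n f"
  by (induction n arbitrary: f) auto

lemma n_times_differentiable_const: "n_times_differentiable n (\<lambda>x. c)"
  by (induction n arbitrary: c) (auto intro: n_times_differentiable_SucI[of _ "\<lambda>x. 0"])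

lemma n_times_differentiable_ident: "n_times_differentiable n (\<lambda>x. x)"
  by (cases n) (auto intro: n_times_differentiable_SucI[of _ "\<lambda>x. 1"]
      n_times_differentiable_const)

lemma n_times_differentiable_add:
  "n_times_differentiable n f \<Longrightarrow> n_times_differentiable n g \<Longrightarrow>
     n_times_differentiable n (\<lambda>x. f x + g x)"
proof (induction n arbitrary: f g)
  case (Suc n)
  have "((\<lambda>x. f x + g x) has_real_derivative deriv f x + deriv g x) (at x)" for x
    using Suc.prems by (intro DERIV_add n_times_differentiable_SucD)
  moreover have "n_times_differentiable n (\<lambda>x. deriv f x + deriv g x)"
    using Suc.prems by (intro Suc.IH) simp_all
  ultimately show ?case by (rule n_times_differentiable_SucI)
qed simp

lemma n_times_differentiable_mult:
  "n_times_differentiable n f \<Longrightarrow> n_times_differentiable n g \<Longrightarrow>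
     n_times_differentiable n (\<lambda>x. f x * g x)"
proof (induction n arbitrary: f g)
  case (Suc n)
  have "((\<lambda>x. f x * g x) has_real_derivative deriv f x * g x + deriv g x * f x) (at x)" for x
    using Suc.prems by (intro DERIV_mult n_times_differentiable_SucD)
  moreover have "n_times_differentiable n (\<lambda>x. deriv f x * g x + deriv g x * f x)"
    using Suc.prems n_times_differentiable_Suc_imp[OF Suc.prems(1)]
      n_times_differentiable_Suc_imp[OF Suc.prems(2)]
    by (intro n_times_differentiable_add Suc.IH) simp_all
  ultimately show ?case by (rule n_times_differentiable_SucI)
qed simp

lemma n_times_differentiable_compose:
  "n_times_differentiable n f \<Longrightarrow> n_times_differentiable n g \<Longrightarrow>
     n_times_differentiable n (\<lambda>x. f (g x))"
proof (induction n arbitrary: f g)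
  case (Suc n)
  have "((\<lambda>x. f (g x)) has_real_derivative deriv f (g x) * deriv g x) (at x)" for x
    using Suc.prems by (intro DERIV_chain2 n_times_differentiable_SucD)
  moreover have "n_times_differentiable n (\<lambda>x. deriv f (g x) * deriv g x)"
    using Suc.prems Suc.IH[of "deriv f" g] n_times_differentiable_Suc_imp[OF Suc.prems(2)]
    by (intro n_times_differentiable_mult) simp_all
  ultimately show ?case by (rule n_times_differentiable_SucI)
qed simp

lemma n_times_differentiable_inverse:
  "n_times_differentiable n f \<Longrightarrow> (\<And>x. f x \<noteq> 0) \<Longrightarrow>
     n_times_differentiable n (\<lambda>x. inverse (f x))"
proof (induction n arbitrary: f)
  case (Suc n)
  have "((\<lambda>x. inverse (f x)) has_real_derivative
      - 1 * (deriv f x * (inverse (f x) * inverse (f x)))) (at x)" for x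
    using DERIV_inverse_fun[OF n_times_differentiable_SucD[OF Suc.prems(1)] Suc.prems(2)]
    by (simp add: power2_eq_square)
  moreover have "n_times_differentiable n
      (\<lambda>x. - 1 * (deriv f x * (inverse (f x) * inverse (f x))))"
    using Suc.prems n_times_differentiable_Suc_imp[OF Suc.prems(1)]
    by (intro n_times_differentiable_mult n_times_differentiable_const Suc.IH) simp_all
  ultimately show ?case by (rule n_times_differentiable_SucI)
qed simp

lemma n_times_differentiable_powr:
  "n_times_differentiable n f \<Longrightarrow> (\<And>x. f x > 0) \<Longrightarrow>
     n_times_differentiable n (\<lambda>x. f x powr a)"
proof (induction n arbitrary: f)
  case (Suc n)
  have "((\<lambda>x. f x powr a) has_real_derivative
      a * (f x powr a * (inverse (f x) * deriv f x))) (at x)" for x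
  proof -
    have "f x powr (a - of_nat 1) = f x powr a * inverse (f x)"
      using Suc.prems(2)[of x] by (simp add: powr_diff divide_inverse)
    then show ?thesis
      using DERIV_fun_powr[OF n_times_differentiable_SucD[OF Suc.prems(1), of x]
          Suc.prems(2)[of x], of a]
      by (simp add: mult_ac)
  qed
  moreover have "n_times_differentiable n (\<lambda>x. a * (f x powr a * (inverse (f x) * deriv f x)))"
    using Suc.prems n_times_differentiable_Suc_imp[OF Suc.prems(1)]
    by (intro n_times_differentiable_mult n_times_differentiable_const
        n_times_differentiable_inverse Suc.IH) (simp_all add: less_imp_neq[symmetric])
  ultimately show ?case by (rule n_times_differentiable_SucI)
qed simp

lemma n_times_differentiable_inv:
  assumes L: "\<And>n. n_times_differentiable n L" and pos: "\<And>x. deriv L x > 0" and "surj L"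
  shows "n_times_differentiable n (inv L)"
proof -
  have L_der: "(L has_real_derivative deriv L x) (at x)" for x
    using L[of "Suc 0"] by (rule n_times_differentiable_SucD)
  have "strict_mono L"
    by (rule strict_monoI, rule DERIV_pos_imp_increasing) (use L_der pos in blast)+
  then have inv_L: "inv L (L x) = x" for x
    by (simp add: strict_mono_imp_inj_on)
  have L_inv: "L (inv L y) = y" for y
    using \<open>surj L\<close> by (rule surj_f_inv_f)
  have "isCont (inv L) (L (inv L y))" for y
    by (rule isCont_inverse_function[where d=1 and f=L])
      (simp_all add: inv_L DERIV_isCont[OF L_der])
  then have "isCont (inv L) y" for y
    by (simp only: L_inv)
  then have inv_L_der: "(inv L has_real_derivative inverse (deriv L (inv L y))) (at y)" for y
    using L_der pos[of "inv L y"] L_inv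
    by (intro DERIV_inverse_function[where a="y - 1" and b="y + 1"]) auto
  show ?thesis
  proof (induction n)
    case (Suc n)
    have "n_times_differentiable n (\<lambda>y. deriv L (inv L y))"
      using n_times_differentiable_compose[of n "deriv L" "inv L"] L[of "Suc n"] Suc.IH by simp
    then have "n_times_differentiable n (\<lambda>y. inverse (deriv L (inv L y)))"
      by (rule n_times_differentiable_inverse) (metis pos less_irrefl)
    with inv_L_der show ?case by (rule n_times_differentiable_SucI)
  qed simp
qed

lemma n_times_differentiable_funpow_deriv:
  "n_times_differentiable (k + n) f \<Longrightarrow> n_times_differentiable k ((deriv ^^ n) f)"
  by (induction n arbitrary: f) (simp_all only: funpow_Suc_right comp_apply, simp_all)

lemma smooth_real_iff_n_times_differentiable:
  "smooth_real f \<longleftrightarrow> (\<forall>n. n_times_differentiable n f)"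
proof
  assume "smooth_real f"
  then obtain D where "D 0 = f" and D: "\<And>n x. (D n has_real_derivative D (Suc n) x) (at x)"
    unfolding smooth_real_def by blast
  have "n_times_differentiable n (D k)" for n k
  proof (induction n arbitrary: k)
    case (Suc n)
    from D Suc.IH show ?case by (rule n_times_differentiable_SucI)
  qed simp
  with \<open>D 0 = f\<close> show "\<forall>n. n_times_differentiable n f" by blast
next
  assume "\<forall>n. n_times_differentiable n f"
  then have "n_times_differentiable (Suc 0) ((deriv ^^ n) f)" for n
    using n_times_differentiable_funpow_deriv[of "Suc 0" n f] by simp
  then have "((deriv ^^ n) f has_real_derivative deriv ((deriv ^^ n) f) x) (at x)" for n x
    by (rule n_times_differentiable_SucD)
  then show "smooth_real f"
    unfolding smooth_real_def by (intro exI[of _ "\<lambda>n. (deriv ^^ n) f"]) simp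
qed

lemma smooth_on_halfline_if_smooth_real: "smooth_real f \<Longrightarrow> smooth_on_halfline f"
  unfolding smooth_real_def smooth_on_halfline_def
  by (metis has_field_derivative_at_within)

lemma smooth_real_divide_const:
  assumes "smooth_real f" shows "smooth_real (\<lambda>x. f x / c)"
proof -
  have "n_times_differentiable n (\<lambda>x. f x * inverse c)" for n
    using assms unfolding smooth_real_iff_n_times_differentiable
    by (intro n_times_differentiable_mult n_times_differentiable_const) simp
  then show ?thesis
    by (simp add: smooth_real_iff_n_times_differentiable divide_inverse)
qed

lemma surj_if_continuous_linear_bounds:
  fixes f :: "real \<Rightarrow> real"
  assumes "continuous_on UNIV f" and "0 < a"
    and "\<And>x. 0 \<le> x \<Longrightarrow> a * x \<le> f x" and "\<And>x. x \<le> 0 \<Longrightarrow> f x \<le> a * x"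
  shows "surj f"
proof -
  have f0: "f 0 = 0"
    using assms(3,4)[of 0] by simp
  have "\<exists>x. f x = y" for y
  proof (cases "0 \<le> y")
    case True
    then have "f 0 \<le> y" "y \<le> f (y / a)"
      using f0 assms(2) assms(3)[of "y / a"] by simp_all
    then show ?thesis
      using True assms(1,2) IVT[of f 0 y "y / a"] by (auto simp: continuous_on_eq_continuous_at)
  next
    case False
    then have "f (y / a) \<le> y" "y \<le> f 0"
      using f0 assms(2) assms(4)[of "y / a"] by (simp_all add: divide_nonpos_pos)
    then show ?thesis
      using False assms(1,2) IVT[of f "y / a" y 0]
      by (auto simp: continuous_on_eq_continuous_at divide_nonpos_pos)
  qed
  then show ?thesis by (metis surj_def)
qed

definition euler_operator :: "nat \<Rightarrow> (real \<Rightarrow> real) \<Rightarrow> real \<Rightarrow> real" where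
  "euler_operator k G u = u * deriv G u + real k * G u"

lemma n_times_differentiable_euler_operator:
  "n_times_differentiable (Suc n) G \<Longrightarrow> n_times_differentiable n (euler_operator k G)"
  using n_times_differentiable_Suc_imp[of n G] unfolding euler_operator_def
  by (intro n_times_differentiable_add n_times_differentiable_mult n_times_differentiable_ident
      n_times_differentiable_const) simp_all

lemma deriv_euler_operator:
  assumes "n_times_differentiable 2 G"
  shows "deriv (euler_operator k G) u = (real k + 1) * deriv G u + u * deriv (deriv G) u"
proof -
  have "(G has_real_derivative deriv G u) (at u)"
    and "(deriv G has_real_derivative deriv (deriv G) u) (at u)"
    using assms by (simp_all add: numeral_2_eq_2 DERIV_deriv_iff_field_differentiable)
  then have "(euler_operator k G has_real_derivative
      1 * deriv G u + deriv (deriv G) u * u + real k * deriv G u) (at u)"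
    unfolding euler_operator_def by (intro DERIV_add DERIV_mult DERIV_cmult DERIV_ident)
  then show ?thesis
    by (rule DERIV_imp_deriv[THEN trans]) (simp add: algebra_simps)
qed

lemma deriv_scaled_power_minus_ident:
  assumes "\<And>x. (G has_real_derivative deriv G x) (at x)" and "1 \<le> k"
  shows "deriv (\<lambda>s. G (X * s) * s ^ k - s) s = s ^ (k - 1) * euler_operator k G (X * s) - 1"
proof -
  have "((\<lambda>s. G (X * s) * s ^ k - s) has_real_derivative
      deriv G (X * s) * X * s ^ k + G (X * s) * (real k * s ^ (k - 1)) - 1) (at s)"
    using assms(1) by (auto intro!: derivative_eq_intros DERIV_chain2[of G])
  moreover have "s ^ k = s ^ (k - 1) * s"
    using assms(2) by (cases k) simp_all
  ultimately show ?thesis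
    unfolding euler_operator_def by (auto dest!: DERIV_imp_deriv simp: algebra_simps)
qed

lemma mult_powr_smooth_inverse:
  fixes h :: "real \<Rightarrow> real" and q c :: real
  defines "L \<equiv> \<lambda>u. u * h u powr (1 / q)"
  assumes h: "\<And>n. n_times_differentiable n h" and "0 < q"
    and "0 < c" and h_ge: "\<And>u. c \<le> h u"
    and L_mono: "\<And>u. 0 < q * h u + u * deriv h u"
  shows "n_times_differentiable n (inv L)" and "L (inv L X) = X"
proof -
  have h_pos: "0 < h u" for u
    using \<open>0 < c\<close> h_ge[of u] by linarith
  have L_der: "(L has_real_derivative h u powr (1 / q - 1) * (q * h u + u * deriv h u) / q) (at u)"
    for u
  proof -
    have "(L has_real_derivative
        1 * h u powr (1 / q) + (1 / q * h u powr (1 / q - of_nat 1) * deriv h u) * u) (at u)"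
      unfolding L_def using h[of "Suc 0"] h_pos
      by (intro DERIV_mult DERIV_ident DERIV_fun_powr n_times_differentiable_SucD)
    moreover have "h u powr (1 / q) = h u powr (1 / q - 1) * h u"
      using h_pos[of u] by (simp add: powr_diff)
    ultimately show ?thesis
      using \<open>0 < q\<close> by (simp add: field_simps)
  qed
  have "0 < deriv L u" for u
    using DERIV_imp_deriv[OF L_der] L_mono[of u] h_pos[of u] \<open>0 < q\<close> by simp
  moreover have "n_times_differentiable n L" for n
    unfolding L_def using h h_pos
    by (intro n_times_differentiable_mult n_times_differentiable_ident n_times_differentiable_powr)
  moreover have "surj L"
  proof (rule surj_if_continuous_linear_bounds)
    show "continuous_on UNIV L"
      using DERIV_isCont[OF L_der] by (simp add: continuous_on_eq_continuous_at)
    show "0 < c powr (1 / q)"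
      using \<open>0 < c\<close> by simp
    have root_ge: "c powr (1 / q) \<le> h u powr (1 / q)" for u
      using \<open>0 < c\<close> \<open>0 < q\<close> h_ge[of u] by (intro powr_mono2) simp_all
    show "c powr (1 / q) * u \<le> L u" if "0 \<le> u" for u
      unfolding L_def using mult_right_mono[OF root_ge that] by (simp add: mult.commute)
    show "L u \<le> c powr (1 / q) * u" if "u \<le> 0" for u
      unfolding L_def using mult_right_mono_neg[OF root_ge that] by (simp add: mult.commute)
  qed
  ultimately show "n_times_differentiable n (inv L)" and "L (inv L X) = X"
    by (simp_all add: n_times_differentiable_inv surj_f_inv_f)
qed

lemma smooth_critical_point_branch:
  fixes G :: "real \<Rightarrow> real" and k :: nat and a b :: real
  assumes G: "smooth_real G" and "2 \<le> k" and "0 < a"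
    and E_ge: "\<And>u. a \<le> euler_operator k G u" and E_le: "\<And>u. euler_operator k G u \<le> b"
    and E_mono: "\<And>u. 0 < (real k - 1) * euler_operator k G u + u * deriv (euler_operator k G) u"
  shows "\<exists>\<alpha>. smooth_real \<alpha> \<and> (\<forall>X. deriv (\<lambda>s. G (X * s) * s ^ k - s) (\<alpha> X) = 0 \<and>
           b powr (- 1 / (real k - 1)) \<le> \<alpha> X \<and> \<alpha> X \<le> a powr (- 1 / (real k - 1)))"
proof -
  define q where "q = real k - 1"
  define E where "E = euler_operator k G"
  define L where "L = (\<lambda>u. u * E u powr (1 / q))"
  define \<alpha> where "\<alpha> = (\<lambda>X. E (inv L X) powr (- 1 / q))"
  have "0 < q"
    using \<open>2 \<le> k\<close> by (simp add: q_def)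
  have G_n: "n_times_differentiable n G" for n
    using G by (simp add: smooth_real_iff_n_times_differentiable)
  have E_n: "n_times_differentiable n E" for n
    unfolding E_def using G_n by (rule n_times_differentiable_euler_operator)
  have E_pos: "0 < E u" for u
    using \<open>0 < a\<close> E_ge[of u] by (simp add: E_def)
  have inv_L: "n_times_differentiable n (inv L)" "L (inv L X) = X" for n X
    using mult_powr_smooth_inverse[OF E_n \<open>0 < q\<close> \<open>0 < a\<close>] E_ge E_mono
    by (simp_all add: E_def L_def q_def)
  have "n_times_differentiable n (\<lambda>X. E (inv L X))" for n
    using E_n inv_L(1) by (rule n_times_differentiable_compose)
  then have "n_times_differentiable n \<alpha>" for n
    unfolding \<alpha>_def using E_pos by (rule n_times_differentiable_powr)
  then have "smooth_real \<alpha>"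
    by (simp add: smooth_real_iff_n_times_differentiable)
  moreover have "deriv (\<lambda>s. G (X * s) * s ^ k - s) (\<alpha> X) = 0" for X
  proof -
    define u where "u = inv L X"
    have "X * \<alpha> X = u * (E u powr (1 / q) * E u powr (- 1 / q))"
      using inv_L(2)[of X] by (simp add: \<alpha>_def L_def u_def)
    also have "\<dots> = u"
      using E_pos[of u] by (simp add: powr_add[symmetric])
    finally have "X * \<alpha> X = u" .
    have "0 < \<alpha> X"
      using E_pos[of "inv L X"] by (simp add: \<alpha>_def)
    moreover have "real (k - 1) = q"
      using \<open>2 \<le> k\<close> by (simp add: q_def of_nat_diff)
    ultimately have "\<alpha> X ^ (k - 1) = \<alpha> X powr q"
      by (metis powr_realpow)
    also have "\<dots> = E u powr - 1"
      using \<open>0 < q\<close> by (simp add: \<alpha>_def u_def powr_powr)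
    also have "\<dots> = inverse (E u)"
      using E_pos[of u] by (simp add: powr_neg_one divide_inverse)
    finally have "\<alpha> X ^ (k - 1) * E u = 1"
      using E_pos[of u] by simp
    moreover have "(G has_real_derivative deriv G x) (at x)" for x
      using G_n[of "Suc 0"] by (rule n_times_differentiable_SucD)
    ultimately show ?thesis
      using deriv_scaled_power_minus_ident[of G k X] \<open>2 \<le> k\<close> \<open>X * \<alpha> X = u\<close>
      by (simp add: E_def)
  qed
  moreover have "b powr (- 1 / q) \<le> \<alpha> X \<and> \<alpha> X \<le> a powr (- 1 / q)" for X
  proof -
    have "- 1 / q \<le> 0"
      using \<open>0 < q\<close> by simp
    moreover have "a \<le> E (inv L X)" and "E (inv L X) \<le> b"
      using E_ge E_le by (simp_all add: E_def)
    ultimately show ?thesis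
      unfolding \<alpha>_def using E_pos \<open>0 < a\<close> by (simp add: powr_mono2')
  qed
  ultimately show ?thesis
    unfolding q_def by blast
qed

lemma euler_operator_divide_const:
  assumes "\<And>x. F field_differentiable at x"
  shows "euler_operator k (\<lambda>x. F x / c) u = euler_operator k F u / c"
  using assms by (simp add: euler_operator_def deriv_cdivide_right add_divide_distrib)

lemma euler_operator_bounds:
  fixes F :: "real \<Rightarrow> real" and c :: real
  assumes "2 \<le> k"
    and F'_bounds: "\<And>x. 0 \<le> - x * deriv F x \<and> - x * deriv F x < c / 5"
    and F_bounds: "\<And>x. 9/10 * c \<le> F x \<and> F x \<le> c"
  shows "4/5 * real k * c < euler_operator k F u" and "euler_operator k F u \<le> real k * c"
proof -
  have "0 \<le> c"
    using F'_bounds[of 0] by simp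
  have "real k * (9/10 * c) \<le> real k * F u" and "real k * F u \<le> real k * c"
    using F_bounds[of u] by (intro mult_left_mono; simp)+
  moreover have "2 * (1/10 * c) \<le> real k * (1/10 * c)"
    using \<open>2 \<le> k\<close> \<open>0 \<le> c\<close> by (intro mult_right_mono) simp_all
  ultimately show "4/5 * real k * c < euler_operator k F u" and "euler_operator k F u \<le> real k * c"
    unfolding euler_operator_def using F'_bounds[of u] by linarith+
qed

lemma euler_operator_weighted_derivative_pos:
  fixes F :: "real \<Rightarrow> real" and c :: real
  assumes "2 \<le> k" and F: "n_times_differentiable 2 F"
    and F'_bounds: "\<And>x. 0 \<le> - x * deriv F x \<and> - x * deriv F x < c / 5"
    and F''_bound: "\<And>x. \<bar>x\<^sup>2 * deriv (deriv F) x\<bar> < c / 5"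
    and F_bounds: "\<And>x. 9/10 * c \<le> F x \<and> F x \<le> c"
  shows "0 < (real k - 1) * euler_operator k F u + u * deriv (euler_operator k F) u"
proof -
  have "0 < c"
    using F''_bound[of 0] by simp
  have "(real k - 1) * euler_operator k F u + u * deriv (euler_operator k F) u
      = 2 * real k * (u * deriv F u) + (real k - 1) * (real k * F u) + u\<^sup>2 * deriv (deriv F) u"
    using F by (simp add: deriv_euler_operator euler_operator_def algebra_simps power2_eq_square)
  moreover have "2 * real k * (u * deriv F u) > 2 * real k * (- c / 5)"
    using F'_bounds[of u] \<open>2 \<le> k\<close> by (intro mult_strict_left_mono) simp_all
  moreover have "(real k - 1) * (real k * F u) \<ge> (real k - 1) * (real k * (9/10 * c))"
    using F_bounds[of u] \<open>2 \<le> k\<close> by (intro mult_left_mono) simp_all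
  moreover have "1 * (real k * (9/10 * c)) \<le> (real k - 1) * (real k * (9/10 * c))"
    using \<open>2 \<le> k\<close> \<open>0 < c\<close> by (intro mult_right_mono) simp_all
  moreover have "u\<^sup>2 * deriv (deriv F) u > - c / 5"
    using F''_bound[of u] by linarith
  moreover have "real k * c / 2 > c / 5"
    using \<open>2 \<le> k\<close> \<open>0 < c\<close> by simp
  ultimately show ?thesis
    by (simp add: field_simps)
qed

lemma normalized_euler_operator_conditions:
  fixes F :: "real \<Rightarrow> real" and k :: nat and c :: real
  defines "E \<equiv> euler_operator k (\<lambda>x. F x / c)"
  assumes "2 \<le> k" and F: "smooth_real F"
    and F'_bounds: "\<And>x. 0 \<le> - x * deriv F x \<and> - x * deriv F x < c / 5"
    and F''_bound: "\<And>x. \<bar>x\<^sup>2 * deriv (deriv F) x\<bar> < c / 5"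
    and F_bounds: "\<And>x. 9/10 * c \<le> F x \<and> F x \<le> c"
  shows "4/5 * real k \<le> E u" and "E u \<le> real k"
    and "0 < (real k - 1) * E u + u * deriv E u"
proof -
  have F_n: "n_times_differentiable n F" for n
    using F by (simp add: smooth_real_iff_n_times_differentiable)
  have "0 < c"
    using F''_bound[of 0] by simp
  have E_eq: "E = (\<lambda>u. euler_operator k F u / c)"
    using F_n[of 1] unfolding E_def by (intro ext euler_operator_divide_const) simp
  show "4/5 * real k \<le> E u" and "E u \<le> real k"
    using euler_operator_bounds[OF \<open>2 \<le> k\<close> F'_bounds F_bounds, of u] \<open>0 < c\<close>
    by (simp_all add: E_eq field_simps)
  have "euler_operator k F field_differentiable at u"
    using n_times_differentiable_euler_operator[OF F_n[of "Suc (Suc 0)"]] by simp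
  then have "(real k - 1) * E u + u * deriv E u
      = ((real k - 1) * euler_operator k F u + u * deriv (euler_operator k F) u) / c"
    by (simp add: E_eq deriv_cdivide_right add_divide_distrib)
  then show "0 < (real k - 1) * E u + u * deriv E u"
    using euler_operator_weighted_derivative_pos[OF \<open>2 \<le> k\<close> F_n F'_bounds F''_bound F_bounds]
      \<open>0 < c\<close> by simp
qed

theorem lemma6p6:
  fixes m :: nat and g gt :: "real \<Rightarrow> real" and \<delta> :: real
  assumes m2: "m \<ge> 2"
    and g_smooth: "smooth_real g" and g0: "g 0 > 0"
    and gt_smooth: "smooth_real gt"
    and \<delta>: "0 < \<delta>" "\<delta> < 1"
    and near: "\<And>x. \<bar>x\<bar> \<le> \<delta> \<Longrightarrow> gt x = g x"
    and far: "\<And>x. \<bar>x\<bar> \<ge> 1 \<Longrightarrow> gt x = 9/10 * g 0"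
    and d1: "\<And>x. 0 \<le> - x * deriv gt x \<and> - x * deriv gt x < g 0 / 5"
    and d2: "\<And>x. \<bar>x^2 * deriv (deriv gt) x\<bar> < g 0 / 5"
    and bnd: "\<And>x. 9/10 * g 0 \<le> gt x \<and> gt x \<le> g 0"
  shows "\<exists>\<alpha> :: real \<Rightarrow> real. smooth_on_halfline \<alpha> \<and>
    (\<forall>X\<ge>0.
       deriv (\<lambda>s. (gt (X * s) / g 0) * s ^ (2*m) - s) (\<alpha> X) = 0 \<and>
       (2 * real m) powr (-1 / (2 * real m - 1)) \<le> \<alpha> X \<and>
       \<alpha> X \<le> (4/5 * (2 * real m)) powr (-1 / (2 * real m - 1)))"
proof -
  have "2 \<le> 2 * m" and "0 < 4/5 * real (2 * m)"
    using m2 by simp_all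
  then obtain \<alpha> where "smooth_real \<alpha>"
    and "\<forall>X. deriv (\<lambda>s. gt (X * s) / g 0 * s ^ (2 * m) - s) (\<alpha> X) = 0 \<and>
      real (2 * m) powr (- 1 / (real (2 * m) - 1)) \<le> \<alpha> X \<and>
      \<alpha> X \<le> (4/5 * real (2 * m)) powr (- 1 / (real (2 * m) - 1))"
    using smooth_critical_point_branch[OF smooth_real_divide_const[OF gt_smooth]]
      normalized_euler_operator_conditions[OF \<open>2 \<le> 2 * m\<close> gt_smooth d1 d2 bnd]
    by blast
  then show ?thesis
    using smooth_on_halfline_if_smooth_real by auto
qed

end
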